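(* Let $\mathbb{K}=(K,+,0)$ be a positive commutative monoid. The following are equivalent: (1) $\mathbb{K}$ has the transportation property; (2) the inner consistency property holds for $\mathbb{K}$-relations; (3) every acyclic hypergraph has the local-to-global consistency property for $\mathbb{K}$-relations; (4) the hypergraph $P_3$ with vertices $A,B,C,D$ and hyperedges $\{A,B\},\{B,C\},\{C,D\}$ has the local-to-global consistency property for $\mathbb{K}$-relations.
   Context: A commutative monoid is positive if $p+q=0$ implies $p=q=0$; monoids have at least two elements. Attributes have domains; for a finite attribute set $X$, an $X$-tuple assigns each $A\in X$ a value in its domain; $t[Y]$ is restriction. A $\mathbb{K}$-relation over $X$ is a function $R$ from $X$-tuples to $K$ with finite support $R'=\{t:R(t)\ne0\}$; marginals $R[Y](t)=\sum_{r\in R',r[Y]=t}R(r)$. $R(X)$ and $S(Y)$ are consistent if some $\mathbb{K}$-relation $W$ over $X\cup Y$ has $W[X]=R$, $W[Y]=S$; they are inner consistent if $R[X\cap Y]=S[X\cap Y]$. The inner consistency property holds for $\mathbb{K}$-relations if any two inner consistent $\mathbb{K}$-relations are consistent. $\mathbb{K}$ has the transportation property if for all positive integers $m,n$ and all $b\in K^m$, $c\in K^n$ with $b_1+\dots+b_m=c_1+\dots+c_n$ there is $(d_{ij})\in K^{m\times n}$ with $\sum_j d_{ij}=b_i$ for all $i$ and $\sum_i d_{ij}=c_j$ for all $j$. A hypergraph with hyperedges $X_1,\dots,X_m$ has the local-to-global consistency property for $\mathbb{K}$-relations if every collection $R_1(X_1),\dots,R_m(X_m)$ that is pairwise consistent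 (every two are consistent) is globally consistent (some $W$ over $X_1\cup\dots\cup X_m$ has $W[X_i]=R_i$ for all $i$). A hypergraph is acyclic (Beeri–Fagin–Maier–Yannakakis) iff it has a join tree: a tree on its hyperedges such that for each vertex the hyperedges containing it form a connected subtree. *)

theory Defs
  imports Main
begin

text \<open>Attributes and domain values are modelled by natural numbers; a schema is given by
  a domain assignment Dom (attribute to set of admissible values).\<close>

type_synonym tuple = "nat \<Rightarrow> nat option"
type_synonym 'k krelation = "tuple \<Rightarrow> 'k"

definition is_tuple :: "(nat \<Rightarrow> nat set) \<Rightarrow> nat set \<Rightarrow> tuple \<Rightarrow> bool" where
  "is_tuple Dom X t \<longleftrightarrow> dom t = X \<and> (\<forall>A\<in>X. the (t A) \<in> Dom A)"

definition is_krel :: "(nat \<Rightarrow> nat set) \<Rightarrow> nat set \<Rightarrow> ('k::zero) krelation \<Rightarrow> bool" where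
  "is_krel Dom X R \<longleftrightarrow> (\<forall>t. R t \<noteq> 0 \<longrightarrow> is_tuple Dom X t) \<and> finite {t. R t \<noteq> 0}"

definition support :: "('k::zero) krelation \<Rightarrow> tuple set" where
  "support R = {t. R t \<noteq> 0}"

definition marg :: "('k::comm_monoid_add) krelation \<Rightarrow> nat set \<Rightarrow> 'k krelation" where
  "marg R Y t = (\<Sum>r\<in>{r\<in>support R. r |` Y = t}. R r)"

definition consistent ::
  "(nat \<Rightarrow> nat set) \<Rightarrow> ('k::comm_monoid_add) krelation \<Rightarrow> nat set \<Rightarrow> 'k krelation \<Rightarrow> nat set \<Rightarrow> bool" where
  "consistent Dom R X S Y \<longleftrightarrow>
     (\<exists>W. is_krel Dom (X \<union> Y) W \<and> marg W X = R \<and> marg W Y = S)"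

definition inner_consistent ::
  "('k::comm_monoid_add) krelation \<Rightarrow> nat set \<Rightarrow> 'k krelation \<Rightarrow> nat set \<Rightarrow> bool" where
  "inner_consistent R X S Y \<longleftrightarrow> marg R (X \<inter> Y) = marg S (X \<inter> Y)"

definition inner_consistency_property :: "('k::comm_monoid_add) itself \<Rightarrow> bool" where
  "inner_consistency_property (_::'k itself) \<longleftrightarrow>
     (\<forall>Dom X Y (R::'k krelation) S.
        finite X \<and> finite Y \<and> is_krel Dom X R \<and> is_krel Dom Y S \<and> inner_consistent R X S Y
        \<longrightarrow> consistent Dom R X S Y)"

definition transportation_property :: "('k::comm_monoid_add) itself \<Rightarrow> bool" where
  "transportation_property (_::'k itself) \<longleftrightarrow>
     (\<forall>(m::nat) (n::nat) (b::nat \<Rightarrow> 'k) (c::nat \<Rightarrow> 'k).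
        0 < m \<and> 0 < n \<and> (\<Sum>i<m. b i) = (\<Sum>j<n. c j) \<longrightarrow>
        (\<exists>d::nat \<Rightarrow> nat \<Rightarrow> 'k.
           (\<forall>i<m. (\<Sum>j<n. d i j) = b i) \<and> (\<forall>j<n. (\<Sum>i<m. d i j) = c j)))"

definition hypergraph :: "nat \<Rightarrow> (nat \<Rightarrow> nat set) \<Rightarrow> bool" where
  "hypergraph m X \<longleftrightarrow> (\<forall>i<m. finite (X i)) \<and> inj_on X {..<m}"

definition local_to_global :: "('k::comm_monoid_add) itself \<Rightarrow> nat \<Rightarrow> (nat \<Rightarrow> nat set) \<Rightarrow> bool" where
  "local_to_global (_::'k itself) m X \<longleftrightarrow>
     (\<forall>Dom (R::nat \<Rightarrow> 'k krelation).
        (\<forall>i<m. is_krel Dom (X i) (R i)) \<and>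
        (\<forall>i<m. \<forall>j<m. consistent Dom (R i) (X i) (R j) (X j)) \<longrightarrow>
        (\<exists>W. is_krel Dom (\<Union>i<m. X i) W \<and> (\<forall>i<m. marg W (X i) = R i)))"

definition connected_on :: "'a set \<Rightarrow> ('a \<times> 'a) set \<Rightarrow> bool" where
  "connected_on V E \<longleftrightarrow> (\<forall>u\<in>V. \<forall>v\<in>V. (u, v) \<in> (E \<inter> (V \<times> V))\<^sup>*)"

definition is_tree :: "'a set \<Rightarrow> ('a \<times> 'a) set \<Rightarrow> bool" where
  "is_tree V E \<longleftrightarrow> V \<noteq> {} \<and> E \<subseteq> V \<times> V \<and> sym E \<and> (\<forall>v. (v, v) \<notin> E) \<and>
     connected_on V E \<and>
     (\<forall>u v. (u, v) \<in> E \<longrightarrow> (u, v) \<notin> (E - {(u, v), (v, u)})\<^sup>*)"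

definition join_tree :: "nat \<Rightarrow> (nat \<Rightarrow> nat set) \<Rightarrow> (nat \<times> nat) set \<Rightarrow> bool" where
  "join_tree m X E \<longleftrightarrow> is_tree {..<m} E \<and> (\<forall>v. connected_on {i. i < m \<and> v \<in> X i} E)"

definition acyclic_hypergraph :: "nat \<Rightarrow> (nat \<Rightarrow> nat set) \<Rightarrow> bool" where
  "acyclic_hypergraph m X \<longleftrightarrow> (\<exists>E. join_tree m X E)"

text \<open>P_3 with A,B,C,D = 0,1,2,3 and hyperedges {A,B},{B,C},{C,D}.\<close>
definition P3 :: "nat \<Rightarrow> nat set" where
  "P3 i = {i, Suc i}"

end

theory Submission
  imports Defs
begin

(*
  Transportation gives inner consistency: above each common restriction z to X \<inter> Y the
  fibres of R and S carry the same mass, and a transportation plan between the two fibres,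
  read as weights on the joined tuples r ++ s, is a relation over X \<union> Y with marginals R and S.

  Inner consistency gives local-to-global consistency along a join tree: remove a leaf l with
  neighbour p, glue the relations of the smaller tree, and attach R l. By the running
  intersection property the rest of the tree meets X l only inside X p, where pairwise
  consistency of R l and R p makes the attachment inner consistent.

  P3 is acyclic, and conversely local-to-global consistency for P3 solves transportation
  problems: the instance is encoded as three pairwise consistent relations whose global
  witness, by positivity, is supported on tuples that pair a b-entry with a c-entry.
*)

section \<open>Pushforwards and marginals\<close>

definition pushforward :: "'i set \<Rightarrow> ('i \<Rightarrow> tuple) \<Rightarrow> ('i \<Rightarrow> 'k::comm_monoid_add) \<Rightarrow> 'k krelation" where
  "pushforward I f g t = (\<Sum>i\<in>{i\<in>I. f i = t}. g i)"

lemma marg_eq_pushforward: "marg R Y = pushforward (support R) (\<lambda>r. r |` Y) R"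
  by (simp add: fun_eq_iff marg_def pushforward_def)

lemma pushforward_eq_0:
  assumes "t \<notin> f ` I"
  shows "pushforward I f g t = 0"
proof -
  have "{i \<in> I. f i = t} = {}" using assms by blast
  then show ?thesis unfolding pushforward_def by (simp only: sum.empty)
qed

lemma support_pushforward: "support (pushforward I f g) \<subseteq> f ` I"
  using pushforward_eq_0 unfolding support_def by blast

lemma pushforward_cong:
  "(\<And>i. i \<in> I \<Longrightarrow> f i = f' i) \<Longrightarrow> (\<And>i. i \<in> I \<Longrightarrow> g i = g' i) \<Longrightarrow>
    pushforward I f g = pushforward I f' g'"
  unfolding pushforward_def fun_eq_iff by (intro allI sum.cong) auto

lemma pushforward_at_inj: "inj_on f I \<Longrightarrow> k \<in> I \<Longrightarrow> pushforward I f g (f k) = g k"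
proof -
  assume "inj_on f I" "k \<in> I"
  then have "{i \<in> I. f i = f k} = {k}" unfolding inj_on_def by blast
  then show ?thesis by (simp add: pushforward_def)
qed

lemma pushforward_const: "pushforward I (\<lambda>_. u) g t = (if t = u then sum g I else 0)"
  by (simp add: pushforward_def)

lemma pushforward_Plus:
  assumes "finite A" "finite B"
  shows "pushforward (A <+> B) f g t =
    pushforward A (f \<circ> Inl) (g \<circ> Inl) t + pushforward B (f \<circ> Inr) (g \<circ> Inr) t"
proof -
  have "pushforward (A <+> B) f g t = (\<Sum>i\<in>A <+> B. if f i = t then g i else 0)"
    unfolding pushforward_def using assms by (intro sum.inter_filter) simp
  also have "\<dots> = pushforward A (f \<circ> Inl) (g \<circ> Inl) t + pushforward B (f \<circ> Inr) (g \<circ> Inr) t"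
    using assms by (simp add: sum.Plus sum.inter_filter pushforward_def)
  finally show ?thesis .
qed

lemma marg_pushforward:
  assumes "finite I"
  shows "marg (pushforward I f g) Y = pushforward I (\<lambda>i. f i |` Y) g"
proof
  fix t
  let ?R = "pushforward I f g"
  have "marg ?R Y t = sum ?R {r\<in>support ?R. r |` Y = t}" by (simp add: marg_def)
  also have "\<dots> = sum ?R {r\<in>f ` I. r |` Y = t}"
    using assms support_pushforward[of I f g] by (intro sum.mono_neutral_left) (auto simp: support_def)
  also have "\<dots> = (\<Sum>r\<in>{r\<in>f ` I. r |` Y = t}. sum g {i\<in>{i\<in>I. f i |` Y = t}. f i = r})"
    unfolding pushforward_def by (rule sum.cong[OF refl], rule sum.cong) auto
  also have "\<dots> = sum g {i\<in>I. f i |` Y = t}"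
    by (rule sum.group) (use assms in auto)
  finally show "marg ?R Y t = pushforward I (\<lambda>i. f i |` Y) g t" by (simp add: pushforward_def)
qed

lemma is_krel_pushforward:
  assumes "finite I" "\<And>i. i \<in> I \<Longrightarrow> is_tuple Dom X (f i)"
  shows "is_krel Dom X (pushforward I f g)"
proof -
  have "finite (support (pushforward I f g))"
    using assms(1) support_pushforward by (rule finite_surj)
  moreover have "is_tuple Dom X t" if "t \<in> support (pushforward I f g)" for t
    using that support_pushforward assms(2) by blast
  ultimately show ?thesis unfolding is_krel_def support_def by simp
qed

lemma finite_support_krel: "is_krel Dom X R \<Longrightarrow> finite (support R)"
  by (simp add: is_krel_def support_def)

lemma marg_marg:
  assumes "finite (support W)"
  shows "marg (marg W X) Z = marg W (X \<inter> Z)"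
  unfolding marg_eq_pushforward[of W] marg_pushforward[OF assms] by (simp add: restrict_restrict)

lemma marg_marg_subset: "finite (support W) \<Longrightarrow> Z \<subseteq> X \<Longrightarrow> marg (marg W X) Z = marg W Z"
  by (simp add: marg_marg Int_absorb1)

lemma restrict_map_tuple: "is_tuple Dom X t \<Longrightarrow> t |` X = t"
  unfolding is_tuple_def restrict_map_def fun_eq_iff by (auto simp: domIff)

lemma marg_self:
  assumes "is_krel Dom X R"
  shows "marg R X = R"
proof
  fix t
  have "{r \<in> support R. r |` X = t} = {r \<in> support R. r = t}"
    using assms restrict_map_tuple by (auto simp: is_krel_def support_def)
  then show "marg R X t = R t"
    by (cases "t \<in> support R") (auto simp: marg_def support_def Collect_conj_eq)
qed

lemma marg_eq_sum_param:
  assumes "finite K" "inj_on h K" "\<And>k. k \<in> K \<Longrightarrow> h k |` Y = t"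
    and "\<And>w. W w \<noteq> 0 \<Longrightarrow> w |` Y = t \<Longrightarrow> w \<in> h ` K"
  shows "marg W Y t = (\<Sum>k\<in>K. W (h k))"
proof -
  have "marg W Y t = sum W (h ` K)"
    unfolding marg_def using assms(1,3,4) by (intro sum.mono_neutral_left) (auto simp: support_def)
  also have "\<dots> = (\<Sum>k\<in>K. W (h k))" using sum.reindex[OF assms(2)] by simp
  finally show ?thesis .
qed

lemma consistent_sym: "consistent Dom R X S Y \<Longrightarrow> consistent Dom S Y R X"
  unfolding consistent_def by (auto simp: Un_commute)

lemma consistent_refl: "is_krel Dom X R \<Longrightarrow> consistent Dom R X R X"
  unfolding consistent_def by (auto simp: marg_self)

lemma consistent_pushforward:
  assumes "finite I" "\<And>i. i \<in> I \<Longrightarrow> is_tuple Dom (X \<union> Y) (f i)"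
  shows "consistent Dom (pushforward I (\<lambda>i. f i |` X) g) X (pushforward I (\<lambda>i. f i |` Y) g) Y"
  unfolding consistent_def
  by (intro exI[of _ "pushforward I f g"]) (simp add: assms is_krel_pushforward marg_pushforward)

lemma consistent_marg_eq:
  assumes "consistent Dom R X S Y" "Z \<subseteq> X" "Z \<subseteq> Y"
  shows "marg R Z = marg S Z"
proof -
  obtain W where W: "is_krel Dom (X \<union> Y) W" "marg W X = R" "marg W Y = S"
    using assms(1) unfolding consistent_def by blast
  then show ?thesis
    using assms(2,3) marg_marg_subset[OF finite_support_krel[OF W(1)]] by metis
qed

lemma positive_sum_eq_0D:
  assumes pos: "\<forall>p q :: 'k::comm_monoid_add. p + q = 0 \<longrightarrow> p = 0 \<and> q = 0"
  shows "finite S \<Longrightarrow> sum (f :: _ \<Rightarrow> 'k) S = 0 \<Longrightarrow> x \<in> S \<Longrightarrow> f x = 0"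
proof (induction S rule: finite_induct)
  case (insert a F)
  then have "f a + sum f F = 0" by simp
  then have "f a = 0" "sum f F = 0" using pos by blast+
  then show ?case using insert.IH insert.prems by (cases "x = a") simp_all
qed simp

lemma marg_restrict_nonzero:
  assumes pos: "\<forall>p q :: 'k::comm_monoid_add. p + q = 0 \<longrightarrow> p = 0 \<and> q = 0"
    and "finite (support W)" "W w \<noteq> (0::'k)"
  shows "marg W Y (w |` Y) \<noteq> 0"
proof
  have "finite {r \<in> support W. r |` Y = w |` Y}" using assms(2) by simp
  moreover assume "marg W Y (w |` Y) = 0"
  then have "sum W {r \<in> support W. r |` Y = w |` Y} = 0" unfolding marg_def .
  moreover have "w \<in> {r \<in> support W. r |` Y = w |` Y}" using assms(3) by (simp add: support_def)
  ultimately have "W w = 0" by (rule positive_sum_eq_0D[OF pos])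
  with assms(3) show False by simp
qed

section \<open>Leaves of finite trees\<close>

lemma non_backtracking_walk_closes_cycle:
  assumes "finite V" "range f \<subseteq> V" "sym E"
    and walk: "\<And>n. (f n, f (Suc n)) \<in> E" and turn: "\<And>n. f (Suc (Suc n)) \<noteq> f n"
  shows "\<exists>u v. (u, v) \<in> E \<and> (u, v) \<in> (E - {(u, v), (v, u)})\<^sup>*"
proof -
  have "\<not> inj f"
    using assms(1,2) finite_imageD[of f UNIV] finite_subset infinite_UNIV_nat by blast
  then obtain i j where "i \<noteq> j" "f i = f j" unfolding inj_def by blast
  then have "\<exists>j. \<exists>i<j. f i = f j" by (metis nat_neq_iff)
  from exists_least_iff[THEN iffD1, OF this] obtain j0
    where "\<exists>i<j0. f i = f j0" and least: "\<forall>j<j0. \<not> (\<exists>i<j. f i = f j)"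
    by blast
  then obtain i0 where i0: "i0 < j0" "f i0 = f j0" by blast
  have no_repeat: "f x \<noteq> f y" if "x < y" "y < j0" for x y
    using least that by blast
  txt \<open>The first repetition \<open>f i0 = f j0\<close> closes a cycle: the walk from \<open>f (Suc i0)\<close> to
    \<open>f j0\<close> avoids the edge \<open>{f i0, f (Suc i0)}\<close>, which is therefore not a bridge.\<close>
  define D where "D = {(f i0, f (Suc i0)), (f (Suc i0), f i0)}"
  have edge: "(f k, f (Suc k)) \<in> E - D" if "Suc i0 \<le> k" "k < j0" for k
  proof -
    have "(f k, f (Suc k)) \<noteq> (f i0, f (Suc i0))"
      using no_repeat[of i0 k] that by auto
    moreover have "(f k, f (Suc k)) \<noteq> (f (Suc i0), f i0)"
    proof
      assume reversed: "(f k, f (Suc k)) = (f (Suc i0), f i0)"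
      show False
      proof (cases "Suc k = j0")
        case True
        then show False
          using reversed turn[of i0] no_repeat[of "Suc i0" k] that i0(2) by (cases "k = Suc i0") auto
      next
        case False
        then show False using reversed no_repeat[of i0 "Suc k"] that by auto
      qed
    qed
    ultimately show ?thesis using walk unfolding D_def by blast
  qed
  have "(f (Suc i0), f k) \<in> (E - D)\<^sup>*" if "Suc i0 \<le> k" "k \<le> j0" for k
    using that
  proof (induction k)
    case (Suc k)
    then show ?case
      by (cases "k = i0") (auto intro: rtrancl_into_rtrancl[OF _ edge])
  qed simp
  then have "(f (Suc i0), f i0) \<in> (E - D)\<^sup>*" using i0 by simp
  moreover have "sym ((E - D)\<^sup>*)"
    using \<open>sym E\<close> by (intro sym_rtrancl) (auto simp: sym_def D_def)
  ultimately have "(f i0, f (Suc i0)) \<in> (E - D)\<^sup>*" by (meson symD)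
  then show ?thesis using walk unfolding D_def by blast
qed

lemma tree_has_leaf:
  assumes "finite V" "is_tree V E" "a \<in> V" "b \<in> V" "a \<noteq> b"
  shows "\<exists>l p. (l, p) \<in> E \<and> (\<forall>q. (l, q) \<in> E \<longrightarrow> q = p)"
proof (rule ccontr)
  assume no_leaf: "\<not> ?thesis"
  have sub: "E \<subseteq> V \<times> V" and "sym E" and conn: "connected_on V E"
    and bridges: "\<forall>u v. (u, v) \<in> E \<longrightarrow> (u, v) \<notin> (E - {(u, v), (v, u)})\<^sup>*"
    using assms(2) unfolding is_tree_def by auto
  have turn: "\<exists>z. (y, z) \<in> E \<and> z \<noteq> x" if "(x, y) \<in> E" for x y
    using no_leaf symD[OF \<open>sym E\<close> that] by blast
  have "(a, b) \<in> (E \<inter> V \<times> V)\<^sup>*" using conn assms(3,4) unfolding connected_on_def by blast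
  then obtain c where "(a, c) \<in> E" using assms(5) by (metis IntD1 converse_rtranclE)
  then obtain g where g: "\<And>n. g n \<in> E \<and> fst (g (Suc n)) = snd (g n) \<and> snd (g (Suc n)) \<noteq> fst (g n)"
    using dependent_nat_choice[of "\<lambda>_ e. e \<in> E" "\<lambda>_ e e'. fst e' = snd e \<and> snd e' \<noteq> fst e"] turn
    by fastforce
  have "(fst (g n), fst (g (Suc n))) \<in> E" for n using g[of n] by (metis prod.collapse)
  moreover have "fst (g (Suc (Suc n))) \<noteq> fst (g n)" for n using g[of n] g[of "Suc n"] by metis
  moreover have "range (fst \<circ> g) \<subseteq> V"
  proof -
    have "g n \<in> V \<times> V" for n using g[of n] sub by blast
    then show ?thesis by (simp add: image_subset_iff mem_Times_iff)
  qed
  ultimately show False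
    using non_backtracking_walk_closes_cycle[of V "fst \<circ> g" E] assms(1) \<open>sym E\<close> bridges by auto
qed

lemma connected_on_restrict:
  "S \<subseteq> T \<Longrightarrow> connected_on S (E \<inter> T \<times> T) \<longleftrightarrow> connected_on S E"
  unfolding connected_on_def by (simp add: Int_assoc Times_Int_Times Int_absorb1 Int_absorb2)

lemma connected_on_remove_leaf:
  assumes "sym E" "\<forall>v. (v, v) \<notin> E" and leaf: "\<forall>q. (l, q) \<in> E \<longrightarrow> q = p"
    and conn: "connected_on S E"
  shows "connected_on (S - {l}) E"
proof -
  let ?S' = "S - {l}"
  have "(x \<noteq> l \<longrightarrow> (u, x) \<in> (E \<inter> ?S' \<times> ?S')\<^sup>*) \<and> (x = l \<longrightarrow> (u, p) \<in> (E \<inter> ?S' \<times> ?S')\<^sup>*)"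
    if "(u, x) \<in> (E \<inter> S \<times> S)\<^sup>*" "u \<noteq> l" for u x
    using that
  proof (induction rule: rtrancl_induct)
    case (step w x)
    show ?case
    proof (cases "w = l")
      case True
      then show ?thesis using step assms(2) leaf by blast
    next
      case False
      have "x = l \<Longrightarrow> w = p" using step(2) leaf symD[OF assms(1)] by blast
      then show ?thesis using step False by (auto intro: rtrancl_into_rtrancl)
    qed
  qed simp
  then show ?thesis using conn unfolding connected_on_def by blast
qed

lemma is_tree_remove_leaf:
  assumes "is_tree V E" "(l, p) \<in> E" "\<forall>q. (l, q) \<in> E \<longrightarrow> q = p"
  shows "is_tree (V - {l}) (E \<inter> (V - {l}) \<times> (V - {l}))" (is "is_tree ?V ?E")
proof -
  have sub: "E \<subseteq> V \<times> V" and "sym E" and irrefl: "\<forall>v. (v, v) \<notin> E"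
    and conn: "connected_on V E"
    and bridges: "\<forall>u v. (u, v) \<in> E \<longrightarrow> (u, v) \<notin> (E - {(u, v), (v, u)})\<^sup>*"
    using assms(1) unfolding is_tree_def by auto
  have "p \<in> ?V" using assms(2) sub irrefl by blast
  moreover have "connected_on ?V ?E"
    using connected_on_remove_leaf[OF \<open>sym E\<close> irrefl assms(3) conn] connected_on_restrict[of ?V ?V E]
    by simp
  moreover have "(u, v) \<notin> (?E - {(u, v), (v, u)})\<^sup>*" if "(u, v) \<in> ?E" for u v
    using bridges that rtrancl_mono[of "?E - {(u, v), (v, u)}" "E - {(u, v), (v, u)}"] by blast
  ultimately show ?thesis
    using \<open>sym E\<close> irrefl unfolding is_tree_def sym_def by blast
qed

lemma join_tree_leaf_separator:
  assumes "\<forall>v. connected_on {i \<in> V. v \<in> X i} E" "l \<in> V" "\<forall>q. (l, q) \<in> E \<longrightarrow> q = p"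
  shows "(\<Union>i \<in> V - {l}. X i) \<inter> X l \<subseteq> X p"
proof
  fix v assume "v \<in> (\<Union>i \<in> V - {l}. X i) \<inter> X l"
  then obtain i where i: "i \<in> V" "i \<noteq> l" "v \<in> X i" "v \<in> X l" by blast
  let ?S = "{j \<in> V. v \<in> X j}"
  have "(l, i) \<in> (E \<inter> ?S \<times> ?S)\<^sup>*" using assms(1,2) i unfolding connected_on_def by blast
  then obtain w where "(l, w) \<in> E \<inter> ?S \<times> ?S" using i(2) by (metis converse_rtranclE)
  then show "v \<in> X p" using assms(3) by blast
qed

section \<open>Gluing along a join tree\<close>

lemma extend_by_inner_consistency:
  assumes ICP: "inner_consistency_property TYPE('k::comm_monoid_add)"
    and U: "finite U" "is_krel Dom U (W' :: 'k krelation)" and Y: "finite Y" "is_krel Dom Y S"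
    and "X \<subseteq> U" "marg W' X = R" "consistent Dom R X S Y" "U \<inter> Y \<subseteq> X"
  shows "\<exists>W. is_krel Dom (U \<union> Y) W \<and> marg W U = W' \<and> marg W Y = S"
proof -
  have "marg W' (U \<inter> Y) = marg (marg W' X) (U \<inter> Y)"
    using marg_marg_subset[OF finite_support_krel[OF U(2)]] assms(9) by simp
  also have "\<dots> = marg S (U \<inter> Y)"
    using consistent_marg_eq[OF assms(8)] assms(7,9) by blast
  finally have "inner_consistent W' U S Y" unfolding inner_consistent_def .
  with ICP U Y have "consistent Dom W' U S Y" unfolding inner_consistency_property_def by blast
  then show ?thesis unfolding consistent_def .
qed

lemma join_tree_remove_leaf:
  assumes "is_tree V E" "\<forall>v. connected_on {i \<in> V. v \<in> X i} E"
    and "(l, p) \<in> E" "\<forall>q. (l, q) \<in> E \<longrightarrow> q = p"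
  shows "is_tree (V - {l}) (E \<inter> (V - {l}) \<times> (V - {l}))"
    and "\<forall>v. connected_on {i \<in> V - {l}. v \<in> X i} (E \<inter> (V - {l}) \<times> (V - {l}))"
proof -
  show "is_tree (V - {l}) (E \<inter> (V - {l}) \<times> (V - {l}))"
    using assms(1,3,4) by (rule is_tree_remove_leaf)
  have "sym E" "\<forall>v. (v, v) \<notin> E" using assms(1) unfolding is_tree_def by auto
  show "\<forall>v. connected_on {i \<in> V - {l}. v \<in> X i} (E \<inter> (V - {l}) \<times> (V - {l}))"
  proof
    fix v
    have "connected_on ({i \<in> V. v \<in> X i} - {l}) E"
      using connected_on_remove_leaf[OF \<open>sym E\<close> \<open>\<forall>v. (v, v) \<notin> E\<close> assms(4)] assms(2) by blast
    moreover have "{i \<in> V. v \<in> X i} - {l} = {i \<in> V - {l}. v \<in> X i}" by blast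
    ultimately show "connected_on {i \<in> V - {l}. v \<in> X i} (E \<inter> (V - {l}) \<times> (V - {l}))"
      using connected_on_restrict[of _ "V - {l}" E] by auto
  qed
qed

lemma join_tree_local_to_global:
  assumes ICP: "inner_consistency_property TYPE('k::comm_monoid_add)"
    and "finite V" "is_tree V E" "\<forall>v. connected_on {i \<in> V. v \<in> X i} E"
    and "\<forall>i\<in>V. finite (X i) \<and> is_krel Dom (X i) ((R :: nat \<Rightarrow> 'k krelation) i)"
    and "\<forall>i\<in>V. \<forall>j\<in>V. consistent Dom (R i) (X i) (R j) (X j)"
  shows "\<exists>W. is_krel Dom (\<Union>i\<in>V. X i) W \<and> (\<forall>i\<in>V. marg W (X i) = R i)"
  using assms(2-)
proof (induction "card V" arbitrary: V E rule: less_induct)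
  case less
  note fin = less.prems(1) and tree = less.prems(2) and run = less.prems(3)
    and rels = less.prems(4) and cons = less.prems(5)
  obtain a where "a \<in> V" using tree unfolding is_tree_def by blast
  show ?case
  proof (cases "V = {a}")
    case True
    then show ?thesis using rels marg_self by auto
  next
    case False
    then obtain b where "b \<in> V" "a \<noteq> b" using \<open>a \<in> V\<close> by blast
    then obtain l p where leaf: "(l, p) \<in> E" "\<forall>q. (l, q) \<in> E \<longrightarrow> q = p"
      using tree_has_leaf[OF fin tree \<open>a \<in> V\<close>] by blast
    have "l \<in> V" "p \<in> V" "p \<noteq> l" using leaf(1) tree unfolding is_tree_def by auto
    define V' where "V' = V - {l}"
    define U' where "U' = (\<Union>i\<in>V'. X i)"
    obtain W' where W': "is_krel Dom U' W'" "\<forall>i\<in>V'. marg W' (X i) = R i"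
      using less.hyps[of V' "E \<inter> V' \<times> V'"] card_Diff1_less[OF fin \<open>l \<in> V\<close>]
        join_tree_remove_leaf[OF tree run leaf] fin rels cons
      unfolding U'_def V'_def by auto
    have "finite U'" unfolding U'_def V'_def using fin rels by blast
    moreover have "U' \<inter> X l \<subseteq> X p"
      unfolding U'_def V'_def by (rule join_tree_leaf_separator[OF run \<open>l \<in> V\<close> leaf(2)])
    moreover have "X p \<subseteq> U'" "p \<in> V'" unfolding U'_def V'_def using \<open>p \<in> V\<close> \<open>p \<noteq> l\<close> by auto
    ultimately obtain W where W: "is_krel Dom (U' \<union> X l) W" "marg W U' = W'" "marg W (X l) = R l"
      using extend_by_inner_consistency[OF ICP _ W'(1), of "X l" "R l" "X p" "R p"]
        W'(2) rels cons \<open>l \<in> V\<close> \<open>p \<in> V\<close> by blast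
    have "(\<Union>i\<in>V. X i) = U' \<union> X l" unfolding U'_def V'_def using \<open>l \<in> V\<close> by blast
    moreover have "marg W (X i) = R i" if "i \<in> V" for i
    proof (cases "i = l")
      case False
      then have "i \<in> V'" "X i \<subseteq> U'" using that unfolding U'_def V'_def by auto
      then show ?thesis
        using marg_marg_subset[OF finite_support_krel[OF W(1)]] W(2) W'(2) by metis
    qed (use W(3) in simp)
    ultimately show ?thesis using W(1) by auto
  qed
qed

lemma acyclic_local_to_global:
  assumes "inner_consistency_property TYPE('k::comm_monoid_add)"
    and "hypergraph m X" "acyclic_hypergraph m X"
  shows "local_to_global TYPE('k) m X"
  unfolding local_to_global_def
proof (intro allI impI)
  fix Dom and R :: "nat \<Rightarrow> 'k krelation"
  assume "(\<forall>i<m. is_krel Dom (X i) (R i)) \<and> (\<forall>i<m. \<forall>j<m. consistent Dom (R i) (X i) (R j) (X j))"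
  moreover obtain E where "is_tree {..<m} E" "\<forall>v. connected_on {i \<in> {..<m}. v \<in> X i} E"
    using assms(3) unfolding acyclic_hypergraph_def join_tree_def by auto
  ultimately show "\<exists>W. is_krel Dom (\<Union>i<m. X i) W \<and> (\<forall>i<m. marg W (X i) = R i)"
    using join_tree_local_to_global[OF assms(1), of "{..<m}" E X Dom R] assms(2)
    unfolding hypergraph_def by auto
qed

section \<open>Transportation implies inner consistency\<close>

lemma transportation_finite_sets:
  assumes TP: "transportation_property TYPE('k::comm_monoid_add)"
    and "finite A" "finite B" "A \<noteq> {}" "B \<noteq> {}" and balanced: "sum b A = sum (c :: _ \<Rightarrow> 'k) B"
  shows "\<exists>d. (\<forall>a\<in>A. sum (d a) B = b a) \<and> (\<forall>x\<in>B. (\<Sum>a\<in>A. d a x) = c x)"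
proof -
  obtain gA where gA: "bij_betw gA A {..<card A}"
    using ex_bij_betw_finite_nat[OF \<open>finite A\<close>] atLeast0LessThan by metis
  obtain gB where gB: "bij_betw gB B {..<card B}"
    using ex_bij_betw_finite_nat[OF \<open>finite B\<close>] atLeast0LessThan by metis
  define b' where "b' = b \<circ> inv_into A gA"
  define c' where "c' = c \<circ> inv_into B gB"
  have b': "b' (gA a) = b a" if "a \<in> A" for a
    using gA that by (simp add: b'_def bij_betw_def)
  have c': "c' (gB x) = c x" if "x \<in> B" for x
    using gB that by (simp add: c'_def bij_betw_def)
  have "(\<Sum>i<card A. b' i) = (\<Sum>a\<in>A. b' (gA a))" using sum.reindex_bij_betw[OF gA] by metis
  also have "\<dots> = (\<Sum>x\<in>B. c' (gB x))" using balanced b' c' by simp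
  also have "\<dots> = (\<Sum>j<card B. c' j)" by (rule sum.reindex_bij_betw[OF gB])
  finally have "(\<Sum>i<card A. b' i) = (\<Sum>j<card B. c' j)" .
  moreover have "0 < card A" "0 < card B" using assms(2-5) by auto
  ultimately obtain d' where
    rows: "\<forall>i<card A. (\<Sum>j<card B. d' i j) = b' i" and cols: "\<forall>j<card B. (\<Sum>i<card A. d' i j) = c' j"
    using TP unfolding transportation_property_def by blast
  show ?thesis
  proof (intro exI[of _ "\<lambda>a x. d' (gA a) (gB x)"] conjI ballI)
    fix a assume "a \<in> A"
    have "(\<Sum>x\<in>B. d' (gA a) (gB x)) = (\<Sum>j<card B. d' (gA a) j)"
      by (rule sum.reindex_bij_betw[OF gB])
    also have "\<dots> = b a"
      using rows b' \<open>a \<in> A\<close> bij_betwE[OF gA] by simp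
    finally show "(\<Sum>x\<in>B. d' (gA a) (gB x)) = b a" .
  next
    fix x assume "x \<in> B"
    have "(\<Sum>a\<in>A. d' (gA a) (gB x)) = (\<Sum>i<card A. d' i (gB x))"
      by (rule sum.reindex_bij_betw[OF gA])
    also have "\<dots> = c x"
      using cols c' \<open>x \<in> B\<close> bij_betwE[OF gB] by simp
    finally show "(\<Sum>a\<in>A. d' (gA a) (gB x)) = c x" .
  qed
qed

lemma transportation_finite_sets_nonzero:
  assumes TP: "transportation_property TYPE('k::comm_monoid_add)"
    and pos: "\<forall>p q :: 'k. p + q = 0 \<longrightarrow> p = 0 \<and> q = 0"
    and "finite A" "finite B" "\<forall>a\<in>A. b a \<noteq> 0" "\<forall>x\<in>B. c x \<noteq> 0"
    and balanced: "sum b A = sum (c :: _ \<Rightarrow> 'k) B"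
  shows "\<exists>d. (\<forall>a\<in>A. sum (d a) B = b a) \<and> (\<forall>x\<in>B. (\<Sum>a\<in>A. d a x) = c x)"
proof (cases "A = {} \<or> B = {}")
  case True
  then have "A = {} \<and> B = {}"
    using assms(3-6) balanced positive_sum_eq_0D[OF pos] by (metis sum.empty ex_in_conv)
  then show ?thesis by simp
next
  case False
  then show ?thesis using transportation_finite_sets[OF TP assms(3,4) _ _ balanced] by blast
qed

lemma map_add_restrict_left:
  assumes "dom r = X" "dom s = Y" "r |` (X \<inter> Y) = s |` (X \<inter> Y)"
  shows "(r ++ s) |` X = r"
proof
  fix x
  show "((r ++ s) |` X) x = r x"
  proof (cases "x \<in> X \<inter> Y")
    case True
    then have "s x = r x" using assms(3) by (metis restrict_in)
    then show ?thesis using True by (simp add: map_add_def split: option.split)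
  next
    case False
    show ?thesis
    proof (cases "x \<in> X")
      case True
      then have "x \<notin> dom s" using False assms(2) by blast
      then show ?thesis using True by (simp add: map_add_dom_app_simps)
    next
      case False
      then show ?thesis using assms(1) by auto
    qed
  qed
qed

lemma map_add_restrict_right: "dom s = Y \<Longrightarrow> (r ++ s) |` Y = s"
  by (auto simp: fun_eq_iff restrict_map_def map_add_dom_app_simps)

lemma is_tuple_map_add:
  "is_tuple Dom X r \<Longrightarrow> is_tuple Dom Y s \<Longrightarrow> is_tuple Dom (X \<union> Y) (r ++ s)"
  unfolding is_tuple_def by (auto simp: map_add_def split: option.splits) (metis domI option.sel)+

lemma pushforward_fst:
  "pushforward G fst g t = (\<Sum>s\<in>{s. (t, s) \<in> G}. g (t, s))"
proof -
  have "{i \<in> G. fst i = t} = Pair t ` {s. (t, s) \<in> G}" by force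
  then show ?thesis unfolding pushforward_def by (simp add: sum.reindex inj_on_def)
qed

lemma pushforward_snd:
  "pushforward G snd g t = (\<Sum>r\<in>{r. (r, t) \<in> G}. g (r, t))"
proof -
  have "{i \<in> G. snd i = t} = (\<lambda>r. (r, t)) ` {r. (r, t) \<in> G}" by force
  then show ?thesis unfolding pushforward_def by (simp add: sum.reindex inj_on_def)
qed

lemma consistent_of_coupling:
  assumes kR: "is_krel Dom X R" and kS: "is_krel Dom Y S"
    and rows: "\<And>r. r \<in> support R \<Longrightarrow>
      (\<Sum>s\<in>{s \<in> support S. r |` (X \<inter> Y) = s |` (X \<inter> Y)}. d r s) = R r"
    and cols: "\<And>s. s \<in> support S \<Longrightarrow>
      (\<Sum>r\<in>{r \<in> support R. r |` (X \<inter> Y) = s |` (X \<inter> Y)}. d r s) = S s"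
  shows "consistent Dom R X S Y"
proof -
  define G where "G = {(r, s). r \<in> support R \<and> s \<in> support S \<and> r |` (X \<inter> Y) = s |` (X \<inter> Y)}"
  define W where "W = pushforward G (\<lambda>(r, s). r ++ s) (case_prod d)"
  have tR: "is_tuple Dom X r" if "r \<in> support R" for r
    using kR that unfolding is_krel_def support_def by auto
  have tS: "is_tuple Dom Y s" if "s \<in> support S" for s
    using kS that unfolding is_krel_def support_def by auto
  have domR: "dom r = X" if "r \<in> support R" for r using tR[OF that] by (simp add: is_tuple_def)
  have domS: "dom s = Y" if "s \<in> support S" for s using tS[OF that] by (simp add: is_tuple_def)
  have "finite G"
    using finite_subset[of G "support R \<times> support S"] finite_support_krel[OF kR] finite_support_krel[OF kS]
    unfolding G_def by auto
  have "is_krel Dom (X \<union> Y) W"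
    unfolding W_def using \<open>finite G\<close>
    by (rule is_krel_pushforward) (auto simp: G_def intro!: is_tuple_map_add tR tS)
  moreover have "marg W X = R"
  proof
    fix t
    have "marg W X = pushforward G fst (case_prod d)"
      unfolding W_def marg_pushforward[OF \<open>finite G\<close>]
      by (intro pushforward_cong) (auto simp: G_def intro!: map_add_restrict_left[OF domR domS])
    then show "marg W X t = R t"
      using rows[of t] unfolding pushforward_fst G_def by (cases "t \<in> support R") (auto simp: support_def)
  qed
  moreover have "marg W Y = S"
  proof
    fix t
    have "marg W Y = pushforward G snd (case_prod d)"
      unfolding W_def marg_pushforward[OF \<open>finite G\<close>]
      by (intro pushforward_cong) (auto simp: G_def intro!: map_add_restrict_right[OF domS])
    then show "marg W Y t = S t"
      using cols[of t] unfolding pushforward_snd G_def by (cases "t \<in> support S") (auto simp: support_def)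
  qed
  ultimately show ?thesis unfolding consistent_def by blast
qed

lemma transportation_imp_inner_consistency:
  assumes TP: "transportation_property TYPE('k::comm_monoid_add)"
    and pos: "\<forall>p q :: 'k. p + q = 0 \<longrightarrow> p = 0 \<and> q = 0"
  shows "inner_consistency_property TYPE('k)"
  unfolding inner_consistency_property_def
proof (intro allI impI)
  fix Dom X Y and R S :: "'k krelation"
  assume "finite X \<and> finite Y \<and> is_krel Dom X R \<and> is_krel Dom Y S \<and> inner_consistent R X S Y"
  then have kR: "is_krel Dom X R" and kS: "is_krel Dom Y S" and inner: "marg R (X \<inter> Y) = marg S (X \<inter> Y)"
    unfolding inner_consistent_def by auto
  let ?Z = "X \<inter> Y"
  define A where "A z = {r \<in> support R. r |` ?Z = z}" for z
  define B where "B z = {s \<in> support S. s |` ?Z = z}" for z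
  have "\<exists>e. (\<forall>r\<in>A z. sum (e r) (B z) = R r) \<and> (\<forall>s\<in>B z. (\<Sum>r\<in>A z. e r s) = S s)" for z
  proof (rule transportation_finite_sets_nonzero[OF TP pos])
    show "finite (A z)" "finite (B z)"
      using finite_support_krel[OF kR] finite_support_krel[OF kS] unfolding A_def B_def by auto
    show "\<forall>r\<in>A z. R r \<noteq> 0" "\<forall>s\<in>B z. S s \<noteq> 0" unfolding A_def B_def support_def by auto
    show "sum R (A z) = sum S (B z)"
      using fun_cong[OF inner, of z] unfolding A_def B_def marg_def .
  qed
  then obtain e where
    rows: "\<And>z. \<forall>r\<in>A z. sum (e z r) (B z) = R r" and cols: "\<And>z. \<forall>s\<in>B z. (\<Sum>r\<in>A z. e z r s) = S s"
    by metis
  show "consistent Dom R X S Y"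
  proof (rule consistent_of_coupling[OF kR kS, where d = "\<lambda>r s. e (r |` ?Z) r s"])
    fix r assume "r \<in> support R"
    then have "r \<in> A (r |` ?Z)" by (simp add: A_def)
    moreover have "{s \<in> support S. r |` ?Z = s |` ?Z} = B (r |` ?Z)" unfolding B_def by auto
    ultimately show "(\<Sum>s\<in>{s \<in> support S. r |` ?Z = s |` ?Z}. e (r |` ?Z) r s) = R r"
      using rows by simp
  next
    fix s assume "s \<in> support S"
    then have "s \<in> B (s |` ?Z)" by (simp add: B_def)
    moreover have "{r \<in> support R. r |` ?Z = s |` ?Z} = A (s |` ?Z)" unfolding A_def by auto
    moreover have "(\<Sum>r\<in>A (s |` ?Z). e (r |` ?Z) r s) = (\<Sum>r\<in>A (s |` ?Z). e (s |` ?Z) r s)"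
      by (rule sum.cong) (simp_all add: A_def)
    ultimately show "(\<Sum>r\<in>{r \<in> support R. r |` ?Z = s |` ?Z}. e (r |` ?Z) r s) = S s"
      using cols by simp
  qed
qed

section \<open>The path \<open>P3\<close>\<close>

lemma all_less_3: "(\<forall>i<3. P i) \<longleftrightarrow> P (0::nat) \<and> P 1 \<and> P 2"
  unfolding numeral_3_eq_3 numeral_2_eq_2 by (auto simp: less_Suc_eq One_nat_def)

lemma P3_simps: "P3 0 = {0, 1}" "P3 1 = {1, 2}" "P3 2 = {2, 3}"
  by (simp_all add: P3_def numeral_2_eq_2 numeral_3_eq_3)

lemma Union_P3: "(\<Union>i<3. P3 i) = {0, 1, 2, 3}"
proof (rule set_eqI)
  fix x :: nat
  have "x \<in> (\<Union>i<3. P3 i) \<longleftrightarrow> (\<exists>i<3. x = i \<or> x = Suc i)" by (auto simp: P3_def)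
  also have "\<dots> \<longleftrightarrow> x \<in> {0, 1, 2, 3}" by simp presburger
  finally show "x \<in> (\<Union>i<3. P3 i) \<longleftrightarrow> x \<in> {0, 1, 2, 3}" .
qed

lemma P3_hypergraph: "hypergraph 3 P3"
  unfolding hypergraph_def P3_def inj_on_def by (auto simp: doubleton_eq_iff)

definition P3_tree :: "(nat \<times> nat) set" where
  "P3_tree = {(i, j). i < 3 \<and> j < 3 \<and> (j = Suc i \<or> i = Suc j)}"

lemma P3_join_tree: "join_tree 3 P3 P3_tree"
proof -
  have restr: "P3_tree \<inter> {..<3} \<times> {..<3} = P3_tree" by (auto simp: P3_tree_def)
  have "sym P3_tree" by (auto simp: sym_def P3_tree_def)
  have up: "(i, k) \<in> P3_tree\<^sup>*" if "i \<le> k" "k < 3" for i k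
    using that by (induction k) (auto simp: le_Suc_eq P3_tree_def intro: rtrancl_into_rtrancl)
  have "(i, j) \<in> P3_tree\<^sup>*" if "i < 3" "j < 3" for i j
    using up[of i j] up[of j i] symD[OF sym_rtrancl[OF \<open>sym P3_tree\<close>]] that by fastforce
  then have "connected_on {..<3} P3_tree" unfolding connected_on_def restr by auto
  moreover have "(u, v) \<notin> (P3_tree - {(u, v), (v, u)})\<^sup>*" if "(u, v) \<in> P3_tree" for u v
  proof
    let ?E = "P3_tree - {(u, v), (v, u)}"
    define S where "S = (if u < v then {..u} else {u..})"
    assume "(u, v) \<in> ?E\<^sup>*"
    moreover have "u \<in> S" by (simp add: S_def)
    ultimately have "v \<in> ?E\<^sup>* `` S" by blast
    moreover have "?E `` S \<subseteq> S" using that by (auto simp: P3_tree_def S_def)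
    ultimately have "v \<in> S" using Image_closed_trancl by blast
    then show False using that by (auto simp: P3_tree_def S_def)
  qed
  moreover have "connected_on {i. i < 3 \<and> v \<in> P3 i} P3_tree" (is "connected_on ?S _") for v
  proof -
    have "(i, j) \<in> P3_tree \<inter> ?S \<times> ?S \<or> i = j" if "i \<in> ?S" "j \<in> ?S" for i j
      using that by (auto simp: P3_def P3_tree_def)
    then show ?thesis unfolding connected_on_def by blast
  qed
  moreover have "{..<3::nat} \<noteq> {}" by (metis lessThan_iff empty_iff zero_less_numeral)
  ultimately show ?thesis
    using \<open>sym P3_tree\<close> unfolding join_tree_def is_tree_def by (auto simp: P3_tree_def)
qed

lemma P3_acyclic: "acyclic_hypergraph 3 P3"
  unfolding acyclic_hypergraph_def using P3_join_tree by blast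

lemma consistent_pairs_less_3:
  fixes R :: "nat \<Rightarrow> 'k::comm_monoid_add krelation"
  assumes "\<forall>i<3. is_krel Dom (X i) (R i)"
    and "consistent Dom (R 0) (X 0) (R 1) (X 1)" "consistent Dom (R 1) (X 1) (R 2) (X 2)"
    "consistent Dom (R 0) (X 0) (R 2) (X 2)"
  shows "\<forall>i<3. \<forall>j<3. consistent Dom (R i) (X i) (R j) (X j)"
  using assms unfolding all_less_3 by (blast intro: consistent_sym consistent_refl)

text \<open>A transportation instance \<open>b, c\<close> as relations over \<open>AB, BC, CD\<close> (attributes \<open>0..3\<close>):
  the index \<open>Inl i\<close> carries weight \<open>b i\<close> and tag \<open>0\<close>, the index \<open>Inr j\<close> weight \<open>c j\<close> and tag \<open>1\<close>.
  In \<open>R 2\<close> the value of \<open>C\<close> is the flipped tag, so \<open>R 1\<close> and \<open>R 2\<close> are consistent only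
  because the totals of \<open>b\<close> and \<open>c\<close> agree, and a global witness restricted to
  \<open>B = C = 0\<close> is a transportation plan from \<open>b\<close> to \<open>c\<close>.\<close>

locale P3_transport_instance =
  fixes m n :: nat and b c :: "nat \<Rightarrow> 'k::comm_monoid_add"
begin

definition index :: "(nat + nat) set" where "index = {..<m} <+> {..<n}"

definition tag :: "nat + nat \<Rightarrow> nat" where "tag = case_sum (\<lambda>_. 0) (\<lambda>_. 1)"

definition val :: "nat + nat \<Rightarrow> nat" where "val = case_sum id id"

abbreviation rel :: "(nat + nat \<Rightarrow> tuple) \<Rightarrow> 'k krelation" where
  "rel f \<equiv> pushforward index f (case_sum b c)"

definition R :: "nat \<Rightarrow> 'k krelation" where
  "R = (!) [rel (\<lambda>k. [0 \<mapsto> val k, 1 \<mapsto> tag k]),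
            rel (\<lambda>k. [1 \<mapsto> tag k, 2 \<mapsto> tag k]),
            rel (\<lambda>k. [2 \<mapsto> 1 - tag k, 3 \<mapsto> val k])]"

lemma finite_index: "finite index"
  by (simp add: index_def)

lemma R_simps:
  "R 0 = rel (\<lambda>k. [0 \<mapsto> val k, 1 \<mapsto> tag k])"
  "R 1 = rel (\<lambda>k. [1 \<mapsto> tag k, 2 \<mapsto> tag k])"
  "R 2 = rel (\<lambda>k. [2 \<mapsto> 1 - tag k, 3 \<mapsto> val k])"
  by (simp_all add: R_def numeral_2_eq_2)

lemma rel_swap_tags:
  assumes "(\<Sum>i<m. b i) = (\<Sum>j<n. c j)" "h 0 \<noteq> h 1"
  shows "rel (\<lambda>k. h (1 - tag k)) = rel (\<lambda>k. h (tag k))"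
proof
  fix t
  show "rel (\<lambda>k. h (1 - tag k)) t = rel (\<lambda>k. h (tag k)) t"
    using assms unfolding index_def
    by (simp add: pushforward_Plus comp_def tag_def pushforward_const)
qed

lemma is_krel_R: "\<forall>i<3. is_krel (\<lambda>_. UNIV) (P3 i) (R i)"
  unfolding all_less_3 R_simps P3_simps
  by (auto simp: is_tuple_def intro!: is_krel_pushforward finite_index)

lemma R_pairwise_consistent:
  assumes "(\<Sum>i<m. b i) = (\<Sum>j<n. c j)"
  shows "\<forall>i<3. \<forall>j<3. consistent (\<lambda>_. UNIV) (R i) (P3 i) (R j) (P3 j)"
proof (rule consistent_pairs_less_3[OF is_krel_R])
  have "consistent (\<lambda>_. UNIV)
     (rel (\<lambda>k. [0 \<mapsto> val k, 1 \<mapsto> tag k, 2 \<mapsto> tag k] |` {0, 1})) {0, 1}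
     (rel (\<lambda>k. [0 \<mapsto> val k, 1 \<mapsto> tag k, 2 \<mapsto> tag k] |` {1, 2})) {1, 2}"
    by (rule consistent_pushforward[OF finite_index]) (auto simp: is_tuple_def)
  then show "consistent (\<lambda>_. UNIV) (R 0) (P3 0) (R 1) (P3 1)"
    unfolding R_simps P3_simps by simp
  have "consistent (\<lambda>_. UNIV)
     (rel (\<lambda>k. [1 \<mapsto> 1 - tag k, 2 \<mapsto> 1 - tag k, 3 \<mapsto> val k] |` {1, 2})) {1, 2}
     (rel (\<lambda>k. [1 \<mapsto> 1 - tag k, 2 \<mapsto> 1 - tag k, 3 \<mapsto> val k] |` {2, 3})) {2, 3}"
    by (rule consistent_pushforward[OF finite_index]) (auto simp: is_tuple_def)
  moreover have "rel (\<lambda>k. [1 \<mapsto> 1 - tag k, 2 \<mapsto> 1 - tag k]) = R 1"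
  proof -
    have "[1 \<mapsto> 0, 2 \<mapsto> 0] \<noteq> ([1 \<mapsto> 1, 2 \<mapsto> 1] :: tuple)"
      by (metis fun_upd_same option.inject zero_neq_one)
    then show ?thesis
      using rel_swap_tags[OF assms, of "\<lambda>s. [1 \<mapsto> s, 2 \<mapsto> s]"] unfolding R_simps by simp
  qed
  ultimately show "consistent (\<lambda>_. UNIV) (R 1) (P3 1) (R 2) (P3 2)"
    unfolding R_simps P3_simps by simp
  have "consistent (\<lambda>_. UNIV)
     (rel (\<lambda>k. [0 \<mapsto> val k, 1 \<mapsto> tag k, 2 \<mapsto> 1 - tag k, 3 \<mapsto> val k] |` {0, 1})) {0, 1}
     (rel (\<lambda>k. [0 \<mapsto> val k, 1 \<mapsto> tag k, 2 \<mapsto> 1 - tag k, 3 \<mapsto> val k] |` {2, 3})) {2, 3}"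
    by (rule consistent_pushforward[OF finite_index]) (auto simp: is_tuple_def)
  then show "consistent (\<lambda>_. UNIV) (R 0) (P3 0) (R 2) (P3 2)"
    unfolding R_simps P3_simps by simp
qed

lemma inj_on_rel_AB: "inj_on (\<lambda>k. [0 \<mapsto> val k, 1 \<mapsto> tag k] :: tuple) index"
proof (rule inj_onI)
  fix k k' assume eq: "[0 \<mapsto> val k, 1 \<mapsto> tag k] = ([0 \<mapsto> val k', 1 \<mapsto> tag k'] :: tuple)"
  have "val k = val k'" using fun_cong[OF eq, of 0] by simp
  moreover have "tag k = tag k'" using fun_cong[OF eq, of 1] by simp
  ultimately show "k = k'" by (auto simp: val_def tag_def split: sum.splits)
qed

lemma inj_on_rel_CD: "inj_on (\<lambda>k. [2 \<mapsto> 1 - tag k, 3 \<mapsto> val k] :: tuple) index"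
proof (rule inj_onI)
  fix k k' assume eq: "[2 \<mapsto> 1 - tag k, 3 \<mapsto> val k] = ([2 \<mapsto> 1 - tag k', 3 \<mapsto> val k'] :: tuple)"
  have "val k = val k'" using fun_cong[OF eq, of 3] by simp
  moreover have "1 - tag k = 1 - tag k'" using fun_cong[OF eq, of 2] by simp
  ultimately show "k = k'" by (auto simp: val_def tag_def split: sum.splits)
qed

lemma global_support:
  assumes pos: "\<forall>p q :: 'k. p + q = 0 \<longrightarrow> p = 0 \<and> q = 0"
    and W: "is_krel Dom {0, 1, 2, 3} W" "\<forall>i<3. marg W (P3 i) = R i" and "W w \<noteq> 0"
  shows "\<exists>k\<in>index. \<exists>k'\<in>index. tag k' \<noteq> tag k \<and> w = [0 \<mapsto> val k, 1 \<mapsto> tag k, 2 \<mapsto> tag k, 3 \<mapsto> val k']"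
proof -
  txt \<open>By positivity, the restrictions of \<open>w\<close> lie in the supports of the \<open>R i\<close>.\<close>
  have restr: "w |` P3 i \<in> support (R i)" if "i < 3" for i
    using marg_restrict_nonzero[OF pos finite_support_krel[OF W(1)] \<open>W w \<noteq> 0\<close>, of "P3 i"] W(2) that
    unfolding support_def by simp
  have "w |` {0, 1} \<in> (\<lambda>k. [0 \<mapsto> val k, 1 \<mapsto> tag k]) ` index"
    using restr[of 0] support_pushforward unfolding R_simps P3_simps by fastforce
  then obtain k1 where k1: "k1 \<in> index" "w |` {0, 1} = [0 \<mapsto> val k1, 1 \<mapsto> tag k1]" by blast
  have "w |` {1, 2} \<in> (\<lambda>k. [1 \<mapsto> tag k, 2 \<mapsto> tag k]) ` index"
    using restr[of 1] support_pushforward unfolding R_simps P3_simps by fastforce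
  then obtain k2 where k2: "w |` {1, 2} = [1 \<mapsto> tag k2, 2 \<mapsto> tag k2]" by blast
  have "w |` {2, 3} \<in> (\<lambda>k. [2 \<mapsto> 1 - tag k, 3 \<mapsto> val k]) ` index"
    using restr[of 2] support_pushforward unfolding R_simps P3_simps by fastforce
  then obtain k3 where k3: "k3 \<in> index" "w |` {2, 3} = [2 \<mapsto> 1 - tag k3, 3 \<mapsto> val k3]" by blast
  have w1: "w 0 = Some (val k1)" "w 1 = Some (tag k1)"
    using fun_cong[OF k1(2), of 0] fun_cong[OF k1(2), of 1] by simp_all
  have w2: "w 1 = Some (tag k2)" "w 2 = Some (tag k2)"
    using fun_cong[OF k2, of 1] fun_cong[OF k2, of 2] by simp_all
  have w3: "w 2 = Some (1 - tag k3)" "w 3 = Some (val k3)"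
    using fun_cong[OF k3(2), of 2] fun_cong[OF k3(2), of 3] by simp_all
  have "tag k1 = 1 - tag k3" using w1(2) w2 w3(1) by simp
  then have "tag k3 \<noteq> tag k1" by (auto simp: tag_def split: sum.splits)
  moreover have "w = [0 \<mapsto> val k1, 1 \<mapsto> tag k1, 2 \<mapsto> tag k1, 3 \<mapsto> val k3]"
  proof
    fix x
    have "dom w = {0, 1, 2, 3}"
      using W(1) \<open>W w \<noteq> 0\<close> unfolding is_krel_def is_tuple_def by blast
    show "w x = [0 \<mapsto> val k1, 1 \<mapsto> tag k1, 2 \<mapsto> tag k1, 3 \<mapsto> val k3] x"
    proof (cases "x \<in> {0, 1, 2, 3}")
      case True
      then show ?thesis using w1 w2 w3 \<open>tag k1 = 1 - tag k3\<close> by auto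
    next
      case False
      then have "w x = None" using \<open>dom w = {0, 1, 2, 3}\<close> by blast
      then show ?thesis using False by simp
    qed
  qed
  ultimately show ?thesis using k1(1) k3(1) by blast
qed

lemma plan_row_sum:
  assumes pos: "\<forall>p q :: 'k. p + q = 0 \<longrightarrow> p = 0 \<and> q = 0"
    and W: "is_krel Dom {0, 1, 2, 3} W" "\<forall>i<3. marg W (P3 i) = R i" and "i < m"
  shows "(\<Sum>j<n. W [0 \<mapsto> i, 1 \<mapsto> 0, 2 \<mapsto> 0, 3 \<mapsto> j]) = b i"
proof -
  have "marg W {0, 1} [0 \<mapsto> i, 1 \<mapsto> 0] = (\<Sum>j<n. W [0 \<mapsto> i, 1 \<mapsto> 0, 2 \<mapsto> 0, 3 \<mapsto> j])"
  proof (rule marg_eq_sum_param)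
    fix w assume "W w \<noteq> 0" and restr: "w |` {0, 1} = [0 \<mapsto> i, 1 \<mapsto> 0]"
    then obtain k k' where "k' \<in> index" "tag k' \<noteq> tag k"
      and w: "w = [0 \<mapsto> val k, 1 \<mapsto> tag k, 2 \<mapsto> tag k, 3 \<mapsto> val k']"
      using global_support[OF pos W] by blast
    have "val k = i" "tag k = 0"
      using fun_cong[OF restr, of 0] fun_cong[OF restr, of 1] unfolding w by simp_all
    moreover obtain j where "k' = Inr j" "j < n"
      using \<open>k' \<in> index\<close> \<open>tag k' \<noteq> tag k\<close> \<open>tag k = 0\<close> by (cases k') (auto simp: tag_def index_def)
    ultimately show "w \<in> (\<lambda>j. [0 \<mapsto> i, 1 \<mapsto> 0, 2 \<mapsto> 0, 3 \<mapsto> j]) ` {..<n}"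
      unfolding w by (simp add: val_def)
  qed (auto intro!: inj_onI dest: map_upd_eqD1)
  also have "marg W {0, 1} = R 0" using W(2) unfolding all_less_3 P3_simps by simp
  then have "marg W {0, 1} [0 \<mapsto> i, 1 \<mapsto> 0] = b i"
    using pushforward_at_inj[OF inj_on_rel_AB, where k = "Inl i" and g = "case_sum b c"] \<open>i < m\<close>
    unfolding R_simps by (simp add: index_def val_def tag_def InlI)
  finally show ?thesis ..
qed

lemma plan_column_sum:
  assumes pos: "\<forall>p q :: 'k. p + q = 0 \<longrightarrow> p = 0 \<and> q = 0"
    and W: "is_krel Dom {0, 1, 2, 3} W" "\<forall>i<3. marg W (P3 i) = R i" and "j < n"
  shows "(\<Sum>i<m. W [0 \<mapsto> i, 1 \<mapsto> 0, 2 \<mapsto> 0, 3 \<mapsto> j]) = c j"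
proof -
  have "marg W {2, 3} [2 \<mapsto> 0, 3 \<mapsto> j] = (\<Sum>i<m. W [0 \<mapsto> i, 1 \<mapsto> 0, 2 \<mapsto> 0, 3 \<mapsto> j])"
  proof (rule marg_eq_sum_param)
    fix w assume "W w \<noteq> 0" and restr: "w |` {2, 3} = [2 \<mapsto> 0, 3 \<mapsto> j]"
    then obtain k k' where "k \<in> index" "tag k' \<noteq> tag k"
      and w: "w = [0 \<mapsto> val k, 1 \<mapsto> tag k, 2 \<mapsto> tag k, 3 \<mapsto> val k']"
      using global_support[OF pos W] by blast
    have "tag k = 0" "val k' = j"
      using fun_cong[OF restr, of 2] fun_cong[OF restr, of 3] unfolding w by simp_all
    moreover obtain i where "k = Inl i" "i < m"
      using \<open>k \<in> index\<close> \<open>tag k = 0\<close> by (cases k) (auto simp: tag_def index_def)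
    ultimately show "w \<in> (\<lambda>i. [0 \<mapsto> i, 1 \<mapsto> 0, 2 \<mapsto> 0, 3 \<mapsto> j]) ` {..<m}"
      unfolding w by (simp add: val_def)
  qed (auto intro!: inj_onI dest: fun_cong[where x = "0::nat"])
  also have "marg W {2, 3} = R 2" using W(2) unfolding all_less_3 P3_simps by simp
  then have "marg W {2, 3} [2 \<mapsto> 0, 3 \<mapsto> j] = c j"
    using pushforward_at_inj[OF inj_on_rel_CD, where k = "Inr j" and g = "case_sum b c"] \<open>j < n\<close>
    unfolding R_simps by (simp add: index_def val_def tag_def InrI)
  finally show ?thesis ..
qed

end

lemma P3_local_to_global_imp_transportation:
  assumes pos: "\<forall>p q :: 'k::comm_monoid_add. p + q = 0 \<longrightarrow> p = 0 \<and> q = 0"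
    and "local_to_global TYPE('k) 3 P3"
  shows "transportation_property TYPE('k)"
  unfolding transportation_property_def
proof (intro allI impI)
  fix m n and b c :: "nat \<Rightarrow> 'k"
  assume "0 < m \<and> 0 < n \<and> (\<Sum>i<m. b i) = (\<Sum>j<n. c j)"
  interpret P3_transport_instance m n b c .
  obtain W where W: "is_krel (\<lambda>_. UNIV) (\<Union>i<3. P3 i) W" "\<forall>i<3. marg W (P3 i) = R i"
    using assms(2) is_krel_R R_pairwise_consistent \<open>0 < m \<and> 0 < n \<and> _\<close>
    unfolding local_to_global_def by blast
  show "\<exists>d. (\<forall>i<m. (\<Sum>j<n. d i j) = b i) \<and> (\<forall>j<n. (\<Sum>i<m. d i j) = c j)"
    using plan_row_sum[OF pos W[unfolded Union_P3]] plan_column_sum[OF pos W[unfolded Union_P3]]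
    by (intro exI[of _ "\<lambda>i j. W [0 \<mapsto> i, 1 \<mapsto> 0, 2 \<mapsto> 0, 3 \<mapsto> j]"]) simp
qed

theorem theorem17:
  assumes positive: "\<forall>p q :: 'k::comm_monoid_add. p + q = 0 \<longrightarrow> p = 0 \<and> q = 0"
    and nontrivial: "\<exists>x :: 'k. x \<noteq> 0"
  shows "(transportation_property TYPE('k) \<longleftrightarrow> inner_consistency_property TYPE('k))
       \<and> (inner_consistency_property TYPE('k) \<longleftrightarrow>
            (\<forall>m X. hypergraph m X \<and> acyclic_hypergraph m X \<longrightarrow> local_to_global TYPE('k) m X))
       \<and> ((\<forall>m X. hypergraph m X \<and> acyclic_hypergraph m X \<longrightarrow> local_to_global TYPE('k) m X)
            \<longleftrightarrow> local_to_global TYPE('k) 3 P3)"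
proof -
  have "transportation_property TYPE('k) \<Longrightarrow> inner_consistency_property TYPE('k)"
    using transportation_imp_inner_consistency positive by blast
  moreover have "inner_consistency_property TYPE('k) \<Longrightarrow>
      \<forall>m X. hypergraph m X \<and> acyclic_hypergraph m X \<longrightarrow> local_to_global TYPE('k) m X"
    using acyclic_local_to_global by blast
  moreover have "\<forall>m X. hypergraph m X \<and> acyclic_hypergraph m X \<longrightarrow> local_to_global TYPE('k) m X \<Longrightarrow>
      local_to_global TYPE('k) 3 P3"
    using P3_hypergraph P3_acyclic by blast
  moreover have "local_to_global TYPE('k) 3 P3 \<Longrightarrow> transportation_property TYPE('k)"
    using P3_local_to_global_imp_transportation positive by blast
  ultimately show ?thesis by blast
qed

end
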